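(* Let $L$ be a minimal shift with linear complexity, i.e. $p_L(n)=O(n)$. Then $SP_L$ is finite.
   Context: $A$ is a finite alphabet, and $\sigma$ deletes the first letter. A shift is a closed $L\subseteq A^{\mathbb N}$ with $\sigma(L)\subseteq L$. It is minimal if it contains no nonempty proper closed $\sigma$-invariant subset. $p_L(n)$ is the number of length-$n$ factors of words of $L$. A factor $u$ is left special if $bu$ is a factor for at least two letters $b\in A$. $SP_L$ is the set of infinite words all of whose prefixes are left special factors of $L$. *)

theory Defs
  imports Main "HOL-Library.Landau_Symbols"
begin

text \<open>One-sided infinite words over a finite alphabet 'a are functions nat => 'a.
  The alphabet A is the (finite) type 'a.\<close>

definition shift_map :: "(nat \<Rightarrow> 'a) \<Rightarrow> (nat \<Rightarrow> 'a)" where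
  "shift_map x = (\<lambda>n. x (Suc n))"

definition pref :: "(nat \<Rightarrow> 'a) \<Rightarrow> nat \<Rightarrow> 'a list" where
  "pref x n = map x [0..<n]"

text \<open>Closedness in the product topology of the discrete finite alphabet:
  a word belongs to L as soon as each of its prefixes is a prefix of some word of L.\<close>
definition word_closed :: "(nat \<Rightarrow> 'a) set \<Rightarrow> bool" where
  "word_closed L \<longleftrightarrow> (\<forall>x. (\<forall>n. \<exists>y\<in>L. pref y n = pref x n) \<longrightarrow> x \<in> L)"

definition is_shift :: "(nat \<Rightarrow> 'a) set \<Rightarrow> bool" where
  "is_shift L \<longleftrightarrow> word_closed L \<and> shift_map ` L \<subseteq> L"

definition minimal_shift :: "(nat \<Rightarrow> 'a) set \<Rightarrow> bool" where
  "minimal_shift L \<longleftrightarrow> is_shift L \<and>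
     (\<forall>M. M \<subseteq> L \<and> M \<noteq> {} \<and> is_shift M \<longrightarrow> M = L)"

definition factors :: "(nat \<Rightarrow> 'a) set \<Rightarrow> 'a list set" where
  "factors L = {u. \<exists>x\<in>L. \<exists>i. u = map (\<lambda>j. x (i + j)) [0..<length u]}"

definition complexity :: "(nat \<Rightarrow> 'a) set \<Rightarrow> nat \<Rightarrow> nat" where
  "complexity L n = card {u \<in> factors L. length u = n}"

definition left_special :: "(nat \<Rightarrow> 'a) set \<Rightarrow> 'a list \<Rightarrow> bool" where
  "left_special L u \<longleftrightarrow> u \<in> factors L \<and> (\<exists>a b. a \<noteq> b \<and> a # u \<in> factors L \<and> b # u \<in> factors L)"

definition SP :: "(nat \<Rightarrow> 'a) set \<Rightarrow> (nat \<Rightarrow> 'a) set" where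
  "SP L = {x. \<forall>n. left_special L (pref x n)}"

end

theory Submission
  imports Defs
begin

text \<open>In a minimal shift every factor u extends to the left: the words of L in which u does not
  occur form a subshift, which is empty by minimality, so u occurs in the shift of every x in L,
  say at position i, and then x i # u occurs in x. Hence p(n + 1) - p(n) is at least the number of
  left special factors of length n. If SP L had k distinct elements, their prefixes of length n
  would be k distinct left special factors for all large n, so p would eventually grow by at least
  k at each step, which contradicts p(n) = O(n) once k exceeds the implied constant.\<close>

definition occurs :: "'a list \<Rightarrow> (nat \<Rightarrow> 'a) \<Rightarrow> bool" where
  "occurs u x \<longleftrightarrow> (\<exists>i. \<forall>j<length u. u ! j = x (i + j))"

lemma factors_iff_occurs: "u \<in> factors L \<longleftrightarrow> (\<exists>x\<in>L. occurs u x)"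
proof
  assume "u \<in> factors L"
  then obtain x i where "x \<in> L" and u: "u = map (\<lambda>j. x (i + j)) [0..<length u]"
    unfolding factors_def by blast
  have "\<forall>j<length u. u ! j = x (i + j)"
    by (subst u) simp
  with \<open>x \<in> L\<close> show "\<exists>x\<in>L. occurs u x"
    unfolding occurs_def by blast
next
  assume "\<exists>x\<in>L. occurs u x"
  then obtain x i where "x \<in> L" and "\<forall>j<length u. u ! j = x (i + j)"
    unfolding occurs_def by blast
  then have "u = map (\<lambda>j. x (i + j)) [0..<length u]"
    by (intro nth_equalityI) auto
  with \<open>x \<in> L\<close> show "u \<in> factors L"
    unfolding factors_def by blast
qed

lemma pref_nth: "k < n \<Longrightarrow> pref x n ! k = x k"
  unfolding pref_def by simp

lemma occurs_shift_map: "occurs u (shift_map x) \<Longrightarrow> occurs u x"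
  unfolding occurs_def shift_map_def by (metis add_Suc)

lemma occurs_pref_cong:
  assumes "occurs u x"
  shows "\<exists>n. \<forall>y. pref y n = pref x n \<longrightarrow> occurs u y"
proof -
  from assms obtain i where i: "\<forall>j<length u. u ! j = x (i + j)"
    unfolding occurs_def by blast
  have "occurs u y" if "pref y (i + length u) = pref x (i + length u)" for y
  proof -
    have "y (i + j) = x (i + j)" if "j < length u" for j
      using pref_nth[of "i + j" "i + length u"] that
        \<open>pref y (i + length u) = pref x (i + length u)\<close> by (metis add_less_cancel_left)
    with i show ?thesis
      unfolding occurs_def by (auto intro!: exI[of _ i])
  qed
  then show ?thesis by blast
qed

lemma tl_in_factors:
  assumes "w \<in> factors L"
  shows "tl w \<in> factors L"
proof -
  from assms obtain x i where "x \<in> L" and "\<forall>j<length w. w ! j = x (i + j)"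
    unfolding factors_iff_occurs occurs_def by blast
  then have "\<forall>j<length (tl w). tl w ! j = x (Suc i + j)"
    by (simp add: nth_tl)
  with \<open>x \<in> L\<close> show ?thesis
    unfolding factors_iff_occurs occurs_def by blast
qed

lemma is_shift_avoiding:
  assumes "is_shift L"
  shows "is_shift {x \<in> L. \<not> occurs u x}"
  unfolding is_shift_def
proof
  show "word_closed {x \<in> L. \<not> occurs u x}"
    unfolding word_closed_def
  proof (intro allI impI)
    fix x
    assume approx: "\<forall>n. \<exists>y\<in>{x \<in> L. \<not> occurs u x}. pref y n = pref x n"
    then have "x \<in> L"
      using assms unfolding is_shift_def word_closed_def by blast
    moreover have "\<not> occurs u x"
    proof
      assume "occurs u x"
      then obtain n where n: "\<forall>y. pref y n = pref x n \<longrightarrow> occurs u y"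
        using occurs_pref_cong by blast
      from approx obtain y where "\<not> occurs u y" and "pref y n = pref x n"
        by blast
      with n show False by blast
    qed
    ultimately show "x \<in> {x \<in> L. \<not> occurs u x}" by blast
  qed
  show "shift_map ` {x \<in> L. \<not> occurs u x} \<subseteq> {x \<in> L. \<not> occurs u x}"
    using assms occurs_shift_map unfolding is_shift_def by blast
qed

lemma minimal_shift_left_extension:
  assumes "minimal_shift L" and "u \<in> factors L"
  shows "\<exists>a. a # u \<in> factors L"
proof -
  obtain x where "x \<in> L" and "occurs u x"
    using assms(2) factors_iff_occurs by blast
  have "is_shift L" and minimal: "\<And>M. M \<subseteq> L \<Longrightarrow> M \<noteq> {} \<Longrightarrow> is_shift M \<Longrightarrow> M = L"
    using assms(1) unfolding minimal_shift_def by blast+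
  have "{y \<in> L. \<not> occurs u y} \<noteq> L"
    using \<open>x \<in> L\<close> \<open>occurs u x\<close> by blast
  then have avoiding_empty: "{y \<in> L. \<not> occurs u y} = {}"
    using minimal[OF _ _ is_shift_avoiding[OF \<open>is_shift L\<close>]] by blast
  have "shift_map x \<in> L"
    using \<open>is_shift L\<close> \<open>x \<in> L\<close> unfolding is_shift_def by blast
  with avoiding_empty have "occurs u (shift_map x)"
    by blast
  then obtain i where i: "\<forall>j<length u. u ! j = x (Suc i + j)"
    unfolding occurs_def shift_map_def by auto
  have "\<forall>j<length (x i # u). (x i # u) ! j = x (i + j)"
  proof (intro allI impI)
    fix j assume "j < length (x i # u)"
    with i show "(x i # u) ! j = x (i + j)" by (cases j) auto
  qed
  then have "occurs (x i # u) x"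
    unfolding occurs_def by blast
  with \<open>x \<in> L\<close> show ?thesis
    using factors_iff_occurs by blast
qed

lemma finite_factors_length: "finite {u \<in> factors L. length u = n}"
  for L :: "(nat \<Rightarrow> 'a::finite) set"
proof (rule finite_subset)
  show "finite {xs. set xs \<subseteq> (UNIV :: 'a set) \<and> length xs = n}"
    by (rule finite_lists_length_eq) simp
qed blast

lemma complexity_Suc:
  fixes L :: "(nat \<Rightarrow> 'a::finite) set"
  shows "complexity L (Suc n) = (\<Sum>u\<in>{u \<in> factors L. length u = n}. card {a. a # u \<in> factors L})"
proof -
  let ?S = "{w \<in> factors L. length w = Suc n}" and ?T = "{u \<in> factors L. length u = n}"
  have "tl ` ?S \<subseteq> ?T"
    using tl_in_factors by fastforce
  then have "card ?S = (\<Sum>u\<in>?T. card {w \<in> ?S. tl w = u})"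
    using card_eq_sum sum.group[OF finite_factors_length finite_factors_length, of tl L "Suc n" L n "\<lambda>_. 1::nat"]
    by simp
  also have "\<dots> = (\<Sum>u\<in>?T. card {a. a # u \<in> factors L})"
  proof (rule sum.cong[OF refl])
    fix u assume "u \<in> ?T"
    have "{w \<in> ?S. tl w = u} = (\<lambda>a. a # u) ` {a. a # u \<in> factors L}"
    proof (intro equalityI subsetI)
      fix w assume "w \<in> {w \<in> ?S. tl w = u}"
      then show "w \<in> (\<lambda>a. a # u) ` {a. a # u \<in> factors L}"
        by (cases w) auto
    next
      fix w assume "w \<in> (\<lambda>a. a # u) ` {a. a # u \<in> factors L}"
      with \<open>u \<in> ?T\<close> show "w \<in> {w \<in> ?S. tl w = u}"
        by auto
    qed
    then show "card {w \<in> ?S. tl w = u} = card {a. a # u \<in> factors L}"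
      by (simp add: card_image inj_on_def)
  qed
  finally show ?thesis
    unfolding complexity_def .
qed

lemma left_extensions_card_ge:
  fixes L :: "(nat \<Rightarrow> 'a::finite) set"
  assumes "minimal_shift L" and "u \<in> factors L"
  shows "1 + of_bool (left_special L u) \<le> card {a. a # u \<in> factors L}"
proof (cases "left_special L u")
  case True
  then obtain a b where "a \<noteq> b" "a # u \<in> factors L" "b # u \<in> factors L"
    unfolding left_special_def by blast
  then have "card {a, b} \<le> card {a. a # u \<in> factors L}"
    by (intro card_mono) auto
  with True \<open>a \<noteq> b\<close> show ?thesis by simp
next
  case False
  with minimal_shift_left_extension[OF assms] show ?thesis
    by (simp add: Suc_le_eq card_gt_0_iff)
qed

lemma complexity_Suc_ge:
  fixes L :: "(nat \<Rightarrow> 'a::finite) set"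
  assumes "minimal_shift L"
  shows "complexity L n + card {u. length u = n \<and> left_special L u} \<le> complexity L (Suc n)"
proof -
  let ?T = "{u \<in> factors L. length u = n}"
  have "{u. length u = n \<and> left_special L u} = ?T \<inter> {u. left_special L u}"
    unfolding left_special_def by blast
  then have "complexity L n + card {u. length u = n \<and> left_special L u}
      = (\<Sum>u\<in>?T. 1 + of_bool (left_special L u))"
    using finite_factors_length[of L n]
    by (simp only: sum.distrib complexity_def sum_of_bool_eq card_eq_sum of_nat_id)
  also have "\<dots> \<le> (\<Sum>u\<in>?T. card {a. a # u \<in> factors L})"
    using left_extensions_card_ge[OF assms] by (intro sum_mono) auto
  also have "\<dots> = complexity L (Suc n)"
    by (rule complexity_Suc[symmetric])
  finally show ?thesis .
qed

lemma eventually_inj_on_pref: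
  assumes "finite T"
  shows "\<forall>\<^sub>F n in at_top. inj_on (\<lambda>x. pref x n) T"
proof -
  have separated: "\<forall>\<^sub>F n in at_top. x \<noteq> y \<longrightarrow> pref x n \<noteq> pref y n" for x y :: "nat \<Rightarrow> 'a"
  proof (cases "x = y")
    case False
    then obtain i where "x i \<noteq> y i" by auto
    then have "pref x n \<noteq> pref y n" if "n \<ge> Suc i" for n
      using that pref_nth[of i n] by (metis Suc_le_eq)
    then show ?thesis
      unfolding eventually_at_top_linorder by blast
  qed simp
  have "\<forall>\<^sub>F n in at_top. \<forall>x\<in>T. \<forall>y\<in>T. x \<noteq> y \<longrightarrow> pref x n \<noteq> pref y n"
    by (intro eventually_ball_finite[OF assms] ballI separated)
  then show ?thesis
    by (rule eventually_mono) (auto simp: inj_on_def)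
qed

lemma linear_growth_bounds_increments:
  fixes f :: "nat \<Rightarrow> nat"
  assumes "(\<lambda>n. real (f n)) \<in> O(\<lambda>n. real n)"
  shows "\<exists>k. \<not> (\<forall>\<^sub>F n in at_top. f n + k \<le> f (Suc n))"
proof -
  from assms obtain c where "c > 0" and "\<forall>\<^sub>F n in at_top. real (f n) \<le> c * real n"
    by (elim landau_o.bigE) simp
  define k where "k = nat \<lceil>c\<rceil> + 1"
  show ?thesis
  proof (intro exI notI)
    assume "\<forall>\<^sub>F n in at_top. f n + k \<le> f (Suc n)"
    with \<open>\<forall>\<^sub>F n in at_top. real (f n) \<le> c * real n\<close>
    have "\<forall>\<^sub>F n in at_top. f n + k \<le> f (Suc n) \<and> real (f n) \<le> c * real n"
      by (rule eventually_conj[rotated])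
    then obtain N where N: "\<And>n. n \<ge> N \<Longrightarrow> f n + k \<le> f (Suc n) \<and> real (f n) \<le> c * real n"
      unfolding eventually_at_top_linorder by blast
    have grow: "k * m \<le> f (N + m)" for m
    proof (induction m)
      case (Suc m)
      have "k * Suc m \<le> f (N + m) + k"
        using Suc.IH by simp
      also have "\<dots> \<le> f (N + Suc m)"
        using N[of "N + m"] by simp
      finally show ?case .
    qed simp
    define m where "m = nat \<lceil>c * real N\<rceil> + 1"
    have "(c + 1) * real m \<le> real k * real m"
      unfolding k_def by (intro mult_right_mono) linarith+
    also have "\<dots> \<le> real (f (N + m))"
      using grow[of m] by (metis of_nat_le_iff of_nat_mult)
    also have "\<dots> \<le> c * real N + c * real m"
      using N[of "N + m"] by (simp add: distrib_left)
    finally have "real m \<le> c * real N"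
      by (simp add: distrib_right)
    then show False
      unfolding m_def by linarith
  qed
qed

lemma eventually_card_left_special_ge:
  fixes L :: "(nat \<Rightarrow> 'a::finite) set"
  assumes "T \<subseteq> SP L" and "finite T"
  shows "\<forall>\<^sub>F n in at_top. card T \<le> card {u. length u = n \<and> left_special L u}"
  using eventually_inj_on_pref[OF \<open>finite T\<close>]
proof (rule eventually_mono)
  fix n assume "inj_on (\<lambda>x. pref x n) T"
  then have "card T = card ((\<lambda>x. pref x n) ` T)"
    by (simp add: card_image)
  also have "\<dots> \<le> card {u. length u = n \<and> left_special L u}"
  proof (rule card_mono)
    show "finite {u. length u = n \<and> left_special L u}"
      by (rule finite_subset[OF _ finite_factors_length[of L n]]) (auto simp: left_special_def)
    show "(\<lambda>x. pref x n) ` T \<subseteq> {u. length u = n \<and> left_special L u}"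
      using \<open>T \<subseteq> SP L\<close> by (auto simp: SP_def pref_def)
  qed
  finally show "card T \<le> card {u. length u = n \<and> left_special L u}" .
qed

theorem mainTheorem14:
  fixes L :: "(nat \<Rightarrow> 'a::finite) set"
  assumes "minimal_shift L"
    and "(\<lambda>n. real (complexity L n)) \<in> O(\<lambda>n. real n)"
  shows "finite (SP L)"
proof (rule ccontr)
  assume "infinite (SP L)"
  obtain k where k: "\<not> (\<forall>\<^sub>F n in at_top. complexity L n + k \<le> complexity L (Suc n))"
    using linear_growth_bounds_increments[OF assms(2)] by blast
  obtain T where "T \<subseteq> SP L" "finite T" "card T = k"
    using infinite_arbitrarily_large[OF \<open>infinite (SP L)\<close>] by blast
  with eventually_card_left_special_ge
  have "\<forall>\<^sub>F n in at_top. k \<le> card {u. length u = n \<and> left_special L u}"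
    by blast
  then have "\<forall>\<^sub>F n in at_top. complexity L n + k \<le> complexity L (Suc n)"
  proof (rule eventually_mono)
    fix n assume "k \<le> card {u. length u = n \<and> left_special L u}"
    with complexity_Suc_ge[OF assms(1), of n]
    show "complexity L n + k \<le> complexity L (Suc n)" by linarith
  qed
  with k show False ..
qed

end
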